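(* Let $X$ and $Y$ be Banach spaces and $u:X\to Y$ a continuous linear operator. If the adjoint $u^*:Y^*\to X^*$ is almost summing, then for every $q\geq 2$ and every $(x_i)_{i=1}^\infty\in Rad(X)$ we have $(u(x_i))_{i=1}^\infty\in\ell_q\langle Y\rangle$.
   Context: $r_i$ denote the Rademacher functions. $Rad(X)$ is the space of sequences $(x_i)\subset X$ with $\left(\int_0^1\left\|\sum_{i=1}^\infty r_i(t)x_i\right\|^2dt\right)^{1/2}<\infty$. For $1\le s\le\infty$, $\ell_s^w(X)$ is the space of sequences with $\|(x_i)\|_{w,s}:=\sup_{x^*\in B_{X^*}}\|(x^*(x_i))_i\|_s<\infty$. For $1\le q\le \infty$ with conjugate $q^*$, $\ell_q\langle Y\rangle$ is the space of sequences $(y_i)\subset Y$ such that $\sup\{\sum_i|y_i^*(y_i)|:(y_i^* )\in B_{\ell_{q^*}^w(Y^* )}\}<\infty$. An operator $v\in\mathcal L(E,F)$ is almost summing if there is $C\ge0$ with $\left(\int_0^1\left\|\sum_{i=1}^m r_i(t)v(x_i)\right\|^2dt\right)^{1/2}\le C\|(x_i)_{i=1}^m\|_{w,2}$ for all $m$ and $x_1,\dots,x_m\in E$. *)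

theory Defs
  imports "HOL-Analysis.Analysis"
begin

definition rademacher :: "nat \<Rightarrow> real \<Rightarrow> real" where
  "rademacher n t = sgn (sin (2 ^ n * pi * t))"

definition adjoint_op :: "('a::real_normed_vector \<Rightarrow>\<^sub>L 'b::real_normed_vector)
    \<Rightarrow> (('b \<Rightarrow>\<^sub>L real) \<Rightarrow>\<^sub>L ('a \<Rightarrow>\<^sub>L real))" where
  "adjoint_op u = Blinfun (\<lambda>f. f o\<^sub>L u)"

definition weak2_norm_fin :: "nat \<Rightarrow> (nat \<Rightarrow> 'a::real_normed_vector) \<Rightarrow> real" where
  "weak2_norm_fin m x =
     (SUP f \<in> {f :: 'a \<Rightarrow>\<^sub>L real. norm f \<le> 1}. sqrt (\<Sum>i<m. (blinfun_apply f (x i))\<^sup>2))"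

definition almost_summing :: "('a::real_normed_vector \<Rightarrow>\<^sub>L 'b::real_normed_vector) \<Rightarrow> bool" where
  "almost_summing v \<longleftrightarrow> (\<exists>C\<ge>0. \<forall>m (x :: nat \<Rightarrow> 'a).
     sqrt (integral {0..1} (\<lambda>t. (norm (\<Sum>i<m. rademacher (Suc i) t *\<^sub>R blinfun_apply v (x i)))\<^sup>2))
       \<le> C * weak2_norm_fin m x)"

text \<open>Rad(X): the sequence x_0, x_1, ... (standing for x_1, x_2, ... of the paper) such that
  the Rademacher series sum r_i(t) x_i converges for a.e. t in [0,1] and
  the integral of the squared norm of its sum over [0,1] is finite.\<close>
definition Rad :: "(nat \<Rightarrow> 'a::banach) set" where
  "Rad = {x. (AE t in lborel. t \<in> {0..1} \<longrightarrow> summable (\<lambda>i. rademacher (Suc i) t *\<^sub>R x i)) \<and>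
             (\<lambda>t. (norm (\<Sum>i. rademacher (Suc i) t *\<^sub>R x i))\<^sup>2) integrable_on {0..1}}"

definition weak_lp_ball :: "real \<Rightarrow> (nat \<Rightarrow> 'a::real_normed_vector) set" where
  "weak_lp_ball s = {y. \<forall>f :: 'a \<Rightarrow>\<^sub>L real. norm f \<le> 1 \<longrightarrow>
       summable (\<lambda>i. \<bar>blinfun_apply f (y i)\<bar> powr s) \<and> (\<Sum>i. \<bar>blinfun_apply f (y i)\<bar> powr s) \<le> 1}"

text \<open>The Cohen space l_q<Y> for 1 < q < infinity, conjugate exponent q/(q-1).\<close>
definition cohen_lq :: "real \<Rightarrow> (nat \<Rightarrow> 'b::real_normed_vector) set" where
  "cohen_lq q = {y. \<exists>C. \<forall>ys \<in> weak_lp_ball (q / (q - 1)) :: (nat \<Rightarrow> ('b \<Rightarrow>\<^sub>L real)) set.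
       summable (\<lambda>i. \<bar>blinfun_apply (ys i) (y i)\<bar>) \<and> (\<Sum>i. \<bar>blinfun_apply (ys i) (y i)\<bar>) \<le> C}"

end

theory Submission
  imports Defs
begin

text \<open>Fix \<open>(y\<^sub>i\<^sup>*)\<close> in the unit ball of \<open>\<ell>\<^sub>q\<^sub>*\<^sup>w(Y\<^sup>*)\<close>. Since \<open>q\<^sup>* \<le> 2\<close>, the functionals
  \<open>w\<^sub>i = \<epsilon>\<^sub>i y\<^sub>i\<^sup>*\<close>, with signs \<open>\<epsilon>\<^sub>i\<close> making \<open>w\<^sub>i(u x\<^sub>i) = |y\<^sub>i\<^sup>*(u x\<^sub>i)|\<close>, lie in the unit ball of
  \<open>\<ell>\<^sub>2\<^sup>w(Y\<^sup>*)\<close>, so \<open>u\<^sup>*\<close> being almost summing bounds the \<open>L\<^sup>2\<close> norm of \<open>H(t) = \<Sum>\<^sub>i r\<^sub>i(t) u\<^sup>* w\<^sub>i\<close>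
  by a constant \<open>C\<close>. Orthonormality of the Rademacher functions gives
  \<open>\<Sum>\<^sub>i\<^sub>\<le>\<^sub>m |y\<^sub>i\<^sup>*(u x\<^sub>i)| = \<integral>\<^sub>0\<^sup>1 H(t)(\<Sum>\<^sub>j r\<^sub>j(t) x\<^sub>j) dt\<close>, and Cauchy-Schwarz bounds this by
  \<open>C \<parallel>(x\<^sub>i)\<parallel>\<^sub>R\<^sub>a\<^sub>d\<close>, uniformly in \<open>m\<close>.\<close>

section \<open>Rademacher functions\<close>

lemma sin_add_nat_mult_pi: "sin (x + real k * pi) = (-1) ^ k * sin x"
  by (simp add: sin_add)

lemma sgn_sin_pi_mult:
  assumes "0 \<le> y" "y \<notin> \<int>"
  shows "sgn (sin (pi * y)) = (-1) ^ nat \<lfloor>y\<rfloor>"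
proof -
  define k where "k = nat \<lfloor>y\<rfloor>"
  define f where "f = y - real k"
  have k: "real k = of_int \<lfloor>y\<rfloor>" using assms(1) by (simp add: k_def)
  have "0 < f" using assms k unfolding f_def
    by (metis Ints_of_int diff_gt_0_iff_gt floor_le_iff le_less of_int_floor_le)
  moreover have "f < 1" using k unfolding f_def by linarith
  ultimately have "0 < sin (pi * f)" by (intro sin_gt_zero) auto
  moreover have "sin (pi * y) = (-1) ^ k * sin (pi * f)"
    using sin_add_nat_mult_pi[of "pi * f" k] by (simp add: f_def algebra_simps)
  ultimately show ?thesis unfolding k_def by (cases "even k") (auto simp: sgn_mult)
qed

lemma rademacher_dyadic_interval:
  assumes "j \<le> m" "real k < 2^m * t" "2^m * t < real k + 1"
  shows "rademacher j t = (-1) ^ (k div 2^(m-j))"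
proof -
  define y where "y = 2^j * t"
  have "0 \<le> t" using assms(2) by (smt (verit) of_nat_0_le_iff zero_less_mult_iff zero_less_power)
  then have y0: "0 \<le> y" by (simp add: y_def)
  have "(2::real)^m = 2^j * 2^(m-j)" using assms(1) by (simp flip: power_add)
  then have ym: "2^m * t = y * 2^(m-j)" by (simp add: y_def algebra_simps)
  have fk: "\<lfloor>2^m * t\<rfloor> = int k" using assms(2,3) by (simp add: floor_eq_iff)
  have "\<lfloor>y\<rfloor> = \<lfloor>(2^m * t) / real_of_int (2^(m-j))\<rfloor>" using ym by simp
  also have "\<dots> = \<lfloor>2^m * t\<rfloor> div 2^(m-j)" by (rule floor_divide_real_eq_div) simp
  also have "\<dots> = int (k div 2^(m-j))" using fk by (simp add: zdiv_int)
  finally have fy: "nat \<lfloor>y\<rfloor> = k div 2^(m-j)" by simp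
  have "y \<notin> \<int>"
  proof
    assume "y \<in> \<int>"
    then obtain z where "y = of_int z" by (auto elim: Ints_cases)
    then have "2^m * t = of_int (z * 2^(m-j))" using ym by simp
    then have "int k < z * 2^(m-j)" "z * 2^(m-j) < int k + 1"
      using assms(2,3) by linarith+
    then show False by linarith
  qed
  then have "sgn (sin (pi * y)) = (-1) ^ nat \<lfloor>y\<rfloor>" by (rule sgn_sin_pi_mult[OF y0])
  then show ?thesis using fy by (simp add: rademacher_def y_def algebra_simps)
qed

lemma integrable_dyadic_piecewise_multiple:
  fixes f h :: "real \<Rightarrow> real"
  assumes h: "h integrable_on {0..1}"
    and pieces: "\<And>k. k < 2^m \<Longrightarrow>
      \<exists>c. \<forall>t. real k < 2^m * t \<and> 2^m * t < real k + 1 \<longrightarrow> f t = c * h t"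
  shows "f integrable_on {0..1}"
proof -
  have "n \<le> 2^m \<Longrightarrow> f integrable_on {0..real n / 2^m}" for n
  proof (induction n)
    case 0
    then show ?case using integrable_on_refl[of f 0] by simp
  next
    case (Suc n)
    then have n: "n < 2^m" by simp
    obtain c where c: "\<And>t. real n < 2^m * t \<Longrightarrow> 2^m * t < real n + 1 \<Longrightarrow> f t = c * h t"
      using pieces[OF n] by blast
    have "real (Suc n) \<le> 2^m" using Suc.prems by (metis of_nat_le_iff of_nat_numeral of_nat_power)
    then have "{real n / 2^m .. real (Suc n) / 2^m} \<subseteq> {0..1}" by (auto simp: field_simps)
    then have "(\<lambda>t. c * h t) integrable_on {real n / 2^m .. real (Suc n) / 2^m}"
      by (intro integrable_on_mult_right integrable_on_subinterval[OF h])
    then have last: "f integrable_on {real n / 2^m .. real (Suc n) / 2^m}"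
    proof (rule integrable_spike[where S="{real n / 2^m, real (Suc n) / 2^m}"])
      fix t assume "t \<in> {real n / 2^m .. real (Suc n) / 2^m} - {real n / 2^m, real (Suc n) / 2^m}"
      then have "real n < 2^m * t" "2^m * t < real n + 1" by (auto simp: field_simps)
      then show "f t = c * h t" by (rule c)
    qed auto
    have first: "f integrable_on {0..real n / 2^m}" using Suc n by simp
    show ?case
      by (rule Henstock_Kurzweil_Integration.integrable_combine[OF _ _ first last]) (auto simp: field_simps)
  qed
  from this[of "2^m"] show ?thesis by simp
qed

lemma integrable_rademacher_determined_mult:
  fixes F h :: "real \<Rightarrow> real"
  assumes h: "h integrable_on {0..1}"
    and det: "\<And>t s. (\<forall>j\<le>m. rademacher j t = rademacher j s) \<Longrightarrow> F t = F s"
  shows "(\<lambda>t. F t * h t) integrable_on {0..1}"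
proof (rule integrable_dyadic_piecewise_multiple[OF h, where m=m])
  fix k :: nat
  define mid where "mid = (real k + 1/2) / 2^m"
  have mid: "real k < 2^m * mid" "2^m * mid < real k + 1" by (auto simp: mid_def)
  show "\<exists>c. \<forall>t. real k < 2^m * t \<and> 2^m * t < real k + 1 \<longrightarrow> F t * h t = c * h t"
  proof (intro exI allI impI)
    fix t assume "real k < 2^m * t \<and> 2^m * t < real k + 1"
    then have "\<forall>j\<le>m. rademacher j t = rademacher j mid"
      using mid rademacher_dyadic_interval by metis
    then show "F t * h t = F mid * h t" using det by metis
  qed
qed

lemma integrable_rademacher_determined:
  fixes F :: "real \<Rightarrow> real"
  assumes "\<And>t s. (\<forall>j\<le>m. rademacher j t = rademacher j s) \<Longrightarrow> F t = F s"
  shows "F integrable_on {0..1}"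
  using integrable_rademacher_determined_mult[where h="\<lambda>_. 1" and m=m and F=F] assms by auto

lemma rademacher_shift:
  assumes "m \<le> n"
  shows "rademacher n (t + 1/2^m) = (-1) ^ (2^(n-m)) * rademacher n t"
proof -
  have "(2::real)^n / 2^m = 2^(n-m)" using assms by (simp add: power_diff)
  then have "pi * 2^n / 2^m = pi * 2^(n-m)" by (metis times_divide_eq_right)
  then have arg: "2^n * pi * (t + 1/2^m) = 2^n * pi * t + real (2^(n-m)) * pi"
    by (simp add: algebra_simps)
  show ?thesis unfolding rademacher_def arg sin_add_nat_mult_pi
    by (cases "even (2^(n-m)::nat)") (auto simp: sgn_mult)
qed

lemma rademacher_periodic: "1 \<le> n \<Longrightarrow> rademacher n (t + 1) = rademacher n t"
  using rademacher_shift[of 0 n t] by simp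

lemma rademacher_shift_less: "m < n \<Longrightarrow> rademacher n (t + 1/2^m) = rademacher n t"
  using rademacher_shift[of m n t] by simp

lemma rademacher_shift_self: "rademacher n (t + 1/2^n) = - rademacher n t"
  using rademacher_shift[of n n t] by simp

lemma integral_periodic_shift:
  fixes F :: "real \<Rightarrow> real"
  assumes F: "F integrable_on {0..1}" and per: "\<And>t. F (t + 1) = F t" and c: "0 \<le> c" "c \<le> 1"
  shows "integral {0..1} (\<lambda>t. F (t + c)) = integral {0..1} F"
proof -
  have Fc: "F integrable_on {0..c}" "F integrable_on {c..1}"
    using F c by (auto intro: integrable_on_subinterval)
  then have F1: "F integrable_on {1..1+c}"
    using integrable_shift_real_ivl_iff[of F 1 1 "1+c"] per by simp
  have e1: "integral {1..1+c} F = integral {0..c} F"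
    using integral_shift_real_ivl[of 1 1 "1+c" F] per by simp
  have "F integrable_on {c..1+c}"
    by (rule Henstock_Kurzweil_Integration.integrable_combine[OF _ _ Fc(2) F1]) (use c in auto)
  then have "integral {c..1+c} F = integral {c..1} F + integral {1..1+c} F"
    using Henstock_Kurzweil_Integration.integral_combine[of c 1 "1+c" F] c by simp
  also have "\<dots> = integral {0..1} F"
    using Henstock_Kurzweil_Integration.integral_combine[OF _ _ F, of c] c e1 by simp
  finally show ?thesis
    using integral_shift_real_ivl[of c c "1+c" F] by simp
qed

lemma integral_periodic_antishift_eq_0:
  fixes F :: "real \<Rightarrow> real"
  assumes F: "F integrable_on {0..1}" and per: "\<And>t. F (t + 1) = F t" and c: "0 \<le> c" "c \<le> 1"
    and anti: "\<And>t. F (t + c) = - F t"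
  shows "integral {0..1} F = 0"
proof -
  have "integral {0..1} F = integral {0..1} (\<lambda>t. - F t)"
    using integral_periodic_shift[OF F per c] anti by simp
  then show ?thesis by (simp add: integral_neg)
qed

lemma negligible_rademacher_sq_neq_1: "negligible {t. (rademacher n t)\<^sup>2 \<noteq> 1}"
proof -
  have "{t. (rademacher n t)\<^sup>2 \<noteq> 1} \<subseteq> range (\<lambda>i::int. of_int i / 2^n)"
  proof
    fix t assume "t \<in> {t. (rademacher n t)\<^sup>2 \<noteq> 1}"
    then have "sin (2^n * pi * t) = 0" by (auto simp: rademacher_def sgn_if split: if_splits)
    then obtain i :: int where "2^n * pi * t = of_int i * pi" by (auto simp: sin_zero_iff_int2)
    then show "t \<in> range (\<lambda>i::int. of_int i / 2^n)" by (auto simp: field_simps)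
  qed
  moreover have "negligible (range (\<lambda>i::int. of_int i / (2::real)^n))"
    by (simp add: negligible_iff_null_sets null_sets_completionI countable_imp_null_set_lborel)
  ultimately show ?thesis by (rule negligible_subset[rotated])
qed

lemma integral_rademacher_mult_self: "integral {0..1} (\<lambda>t. rademacher n t * rademacher n t) = 1"
proof -
  have "integral {0..1} (\<lambda>t. rademacher n t * rademacher n t) = integral {0..1::real} (\<lambda>t. 1::real)"
    by (rule integral_spike[OF negligible_rademacher_sq_neq_1[of n]]) (simp add: power2_eq_square)
  then show ?thesis by simp
qed

lemma integral_rademacher_mult_eq_0:
  assumes "1 \<le> j" "j < n"
  shows "integral {0..1} (\<lambda>t. rademacher n t * rademacher j t) = 0"
proof (rule integral_periodic_antishift_eq_0[where c="1/2^j"])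
  show "(\<lambda>t. rademacher n t * rademacher j t) integrable_on {0..1}"
    by (rule integrable_rademacher_determined[where m=n]) (use assms in auto)
  show "rademacher n (t + 1) * rademacher j (t + 1) = rademacher n t * rademacher j t" for t
    using assms by (simp add: rademacher_periodic)
  show "rademacher n (t + 1/2^j) * rademacher j (t + 1/2^j) = - (rademacher n t * rademacher j t)" for t
    using assms by (simp add: rademacher_shift_less rademacher_shift_self)
qed auto

lemma integral_rademacher_mult_partial_sum:
  "integral {0..1} (\<lambda>t. rademacher (Suc j) t * (\<Sum>i<Suc j. rademacher (Suc i) t * c i)) = c j"
proof -
  have "integral {0..1} (\<lambda>t. rademacher (Suc j) t * (\<Sum>i<Suc j. rademacher (Suc i) t * c i))
      = integral {0..1} (\<lambda>t. \<Sum>i<Suc j. c i * (rademacher (Suc j) t * rademacher (Suc i) t))"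
    by (simp only: sum_distrib_left mult.left_commute mult.commute)
  also have "\<dots> = (\<Sum>i<Suc j. integral {0..1} (\<lambda>t. c i * (rademacher (Suc j) t * rademacher (Suc i) t)))"
    by (rule integral_sum)
       (auto intro!: integrable_on_mult_right integrable_rademacher_determined[where m="Suc j"])
  also have "\<dots> = c j"
    by (simp add: integral_rademacher_mult_self integral_rademacher_mult_eq_0)
  finally show ?thesis .
qed

lemma integral_rademacher_mult_shift_invariant:
  fixes G :: "real \<Rightarrow> real"
  assumes G: "G integrable_on {0..1}" and n: "1 \<le> n"
    and per: "\<And>t. G (t + 1) = G t" and shift: "\<And>t. G (t + 1/2^n) = G t"
  shows "(\<lambda>t. rademacher n t * G t) integrable_on {0..1}"
    and "integral {0..1} (\<lambda>t. rademacher n t * G t) = 0"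
proof -
  show int: "(\<lambda>t. rademacher n t * G t) integrable_on {0..1}"
    by (rule integrable_rademacher_determined_mult[OF G, where m=n]) auto
  show "integral {0..1} (\<lambda>t. rademacher n t * G t) = 0"
    by (rule integral_periodic_antishift_eq_0[OF int, where c="1/2^n"])
       (auto simp: per shift n rademacher_periodic[OF n] rademacher_shift_self)
qed

section \<open>Rademacher series\<close>

definition radsum :: "(nat \<Rightarrow> 'a::real_normed_vector) \<Rightarrow> real \<Rightarrow> 'a" where
  "radsum x t = (\<Sum>i. rademacher (Suc i) t *\<^sub>R x i)"

lemma Rad_square_integrable:
  "x \<in> Rad \<Longrightarrow> (\<lambda>t. (norm (radsum x t))\<^sup>2) integrable_on {0..1}"
  unfolding Rad_def radsum_def by blast

lemma Rad_summable_ae: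
  assumes "x \<in> Rad"
  obtains N where "negligible N"
    and "\<And>t. t \<in> {0..1} - N \<Longrightarrow> summable (\<lambda>i. rademacher (Suc i) t *\<^sub>R x i)"
proof -
  have "AE t in lborel. t \<in> {0..1} \<longrightarrow> summable (\<lambda>i. rademacher (Suc i) t *\<^sub>R x i)"
    using assms unfolding Rad_def by blast
  then obtain N where "N \<in> null_sets lborel"
    and "\<And>t. t \<in> space lborel - N \<Longrightarrow> t \<in> {0..1} \<longrightarrow> summable (\<lambda>i. rademacher (Suc i) t *\<^sub>R x i)"
    by (rule AE_E3) blast
  then show ?thesis
    by (intro that[of N]) (auto simp: negligible_iff_null_sets null_sets_completionI)
qed

lemma integrable_rademacher_partial_sum:
  "(\<lambda>t. \<Sum>i<k. rademacher (Suc i) t * c i) integrable_on {0..1}"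
  by (rule integrable_rademacher_determined[where m=k]) (auto intro!: sum.cong)

lemma integrable_blinfun_radsum:
  fixes x :: "nat \<Rightarrow> 'a::banach" and g :: "'a \<Rightarrow>\<^sub>L real"
  assumes x: "x \<in> Rad"
  shows "(\<lambda>t. g (radsum x t)) integrable_on {0..1}"
proof -
  obtain N where N: "negligible N"
    and summ: "\<And>t. t \<in> {0..1} - N \<Longrightarrow> summable (\<lambda>i. rademacher (Suc i) t *\<^sub>R x i)"
    using Rad_summable_ae[OF x] by blast
  have meas: "(\<lambda>t. g (radsum x t)) measurable_on {0..1}"
  proof (rule measurable_on_limit[OF _ N])
    show "(\<lambda>t. \<Sum>i<k. rademacher (Suc i) t * g (x i)) measurable_on {0..1}" for k
      using integrable_imp_measurable[OF integrable_rademacher_partial_sum]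
      by (simp add: measurable_on_iff_borel_measurable)
    fix t assume "t \<in> {0..1} - N"
    then have "(\<lambda>k. \<Sum>i<k. rademacher (Suc i) t *\<^sub>R x i) \<longlonglongrightarrow> radsum x t"
      unfolding radsum_def by (intro summable_LIMSEQ summ)
    then have "(\<lambda>k. g (\<Sum>i<k. rademacher (Suc i) t *\<^sub>R x i)) \<longlonglongrightarrow> g (radsum x t)"
      by (rule blinfun.tendsto[OF tendsto_const])
    then show "(\<lambda>k. \<Sum>i<k. rademacher (Suc i) t * g (x i)) \<longlonglongrightarrow> g (radsum x t)"
      by (simp add: blinfun.sum_right blinfun.scaleR_right)
  qed
  show ?thesis
  proof (rule measurable_bounded_by_integrable_imp_integrable_real)
    show "(\<lambda>t. g (radsum x t)) \<in> borel_measurable (lebesgue_on {0..1})"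
      using meas by (simp add: measurable_on_iff_borel_measurable)
    show "(\<lambda>t. norm g / 2 * (1 + (norm (radsum x t))\<^sup>2)) integrable_on {0..1}"
      by (rule integrable_on_mult_right[OF integrable_add[OF integrable_const_ivl Rad_square_integrable[OF x]]])
    fix t :: real
    have "\<bar>g (radsum x t)\<bar> \<le> norm g * norm (radsum x t)"
      using norm_blinfun[of g "radsum x t"] by simp
    also have "\<dots> \<le> norm g * ((1 + (norm (radsum x t))\<^sup>2) / 2)"
      using sum_squares_bound[of 1 "norm (radsum x t)"] by (intro mult_left_mono) simp_all
    finally show "\<bar>g (radsum x t)\<bar> \<le> norm g / 2 * (1 + (norm (radsum x t))\<^sup>2)" by simp
  qed simp
qed

text \<open>The tail \<open>\<Sum>\<^sub>i\<^sub>>\<^sub>j r\<^sub>i(t) x\<^sub>i\<close> is invariant under \<open>t \<mapsto> t + 2\<^sup>-\<^sup>j\<close> while \<open>r\<^sub>j\<close> changes sign,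
  so only the head \<open>\<Sum>\<^sub>i\<^sub>\<le>\<^sub>j r\<^sub>i(t) x\<^sub>i\<close> contributes to the integral.\<close>

lemma integral_rademacher_mult_radsum:
  fixes x :: "nat \<Rightarrow> 'a::banach" and g :: "'a \<Rightarrow>\<^sub>L real"
  assumes x: "x \<in> Rad"
  shows "(\<lambda>t. rademacher (Suc j) t * g (radsum x t)) integrable_on {0..1}"
    and "integral {0..1} (\<lambda>t. rademacher (Suc j) t * g (radsum x t)) = g (x j)"
proof -
  obtain N where N: "negligible N"
    and summ: "\<And>t. t \<in> {0..1} - N \<Longrightarrow> summable (\<lambda>i. rademacher (Suc i) t *\<^sub>R x i)"
    using Rad_summable_ae[OF x] by blast
  define tail where "tail t = g (\<Sum>k. rademacher (Suc (k + Suc j)) t *\<^sub>R x (k + Suc j))" for t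
  define head where "head t = (\<Sum>i<Suc j. rademacher (Suc i) t * g (x i))" for t
  have split: "g (radsum x t) = tail t + head t" if "t \<in> {0..1} - N" for t
    using suminf_split_initial_segment[OF summ[OF that], of "Suc j"]
    by (simp add: radsum_def tail_def head_def blinfun.add_right blinfun.sum_right blinfun.scaleR_right)
  have head_int: "head integrable_on {0..1}"
    unfolding head_def by (rule integrable_rademacher_partial_sum)
  have "(\<lambda>t. g (radsum x t) - head t) integrable_on {0..1}"
    by (intro Henstock_Kurzweil_Integration.integrable_diff integrable_blinfun_radsum[OF x] head_int)
  then have tail: "tail integrable_on {0..1}"
    by (rule integrable_spike[OF _ N]) (simp add: split)
  have tail_periodic: "tail (t + 1) = tail t" for t
    unfolding tail_def by (subst rademacher_periodic) simp_all
  have tail_shift: "tail (t + 1/2^Suc j) = tail t" for t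
    unfolding tail_def by (subst rademacher_shift_less) simp_all
  have tail_int: "(\<lambda>t. rademacher (Suc j) t * tail t) integrable_on {0..1}"
    and tail_0: "integral {0..1} (\<lambda>t. rademacher (Suc j) t * tail t) = 0"
    using integral_rademacher_mult_shift_invariant[OF tail _ tail_periodic tail_shift] by simp_all
  have head_int': "(\<lambda>t. rademacher (Suc j) t * head t) integrable_on {0..1}"
    unfolding head_def
    by (rule integrable_rademacher_determined[where m="Suc j"]) (auto intro!: sum.cong)
  have eq: "rademacher (Suc j) t * g (radsum x t)
      = rademacher (Suc j) t * tail t + rademacher (Suc j) t * head t" if "t \<in> {0..1} - N" for t
    using split[OF that] by (simp add: distrib_left)
  show "(\<lambda>t. rademacher (Suc j) t * g (radsum x t)) integrable_on {0..1}"
    by (rule integrable_spike[OF Henstock_Kurzweil_Integration.integrable_add[OF tail_int head_int'] N])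
       (simp add: eq)
  have "integral {0..1} (\<lambda>t. rademacher (Suc j) t * g (radsum x t))
      = integral {0..1} (\<lambda>t. rademacher (Suc j) t * tail t + rademacher (Suc j) t * head t)"
    by (rule integral_spike[OF N]) (simp add: eq)
  also have "\<dots> = integral {0..1} (\<lambda>t. rademacher (Suc j) t * head t)"
    using Henstock_Kurzweil_Integration.integral_add[OF tail_int head_int'] tail_0 by simp
  also have "\<dots> = g (x j)"
    unfolding head_def by (rule integral_rademacher_mult_partial_sum)
  finally show "integral {0..1} (\<lambda>t. rademacher (Suc j) t * g (radsum x t)) = g (x j)" .
qed

section \<open>The Cohen space estimate\<close>

lemma le_sqrt_mult_sqrtI:
  fixes X A B :: real
  assumes A: "0 \<le> A" and B: "0 \<le> B" and H: "\<And>l. 0 < l \<Longrightarrow> X \<le> l / 2 * A + B / (2 * l)"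
  shows "X \<le> sqrt A * sqrt B"
proof (rule field_le_epsilon)
  fix e :: real assume e: "0 < e"
  define a where "a = sqrt A"
  define b where "b = sqrt B"
  have a0: "0 \<le> a" and b0: "0 \<le> b" by (auto simp: a_def b_def A B)
  have Aa: "A = a * a" and Bb: "B = b * b" by (simp_all add: a_def b_def A B flip: power2_eq_square)
  define d where "d = e / (a + b + 1)"
  have d0: "0 < d" using a0 b0 e by (simp add: d_def)
  have "d * (a + b) \<le> d * (a + b + 1)" using d0 by simp
  also have "\<dots> = e" using a0 b0 by (simp add: d_def)
  finally have dab: "d * (a + b) \<le> e" .
  text \<open>\<open>l = b / a\<close> would give equality; perturbing by \<open>d\<close> keeps \<open>l\<close> positive when \<open>a\<close> or \<open>b\<close> vanishes.\<close>
  define l where "l = (b + d) / (a + d)"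
  have l0: "0 < l" using a0 b0 d0 by (simp add: l_def)
  have "l / 2 * A = (b + d) / 2 * (a * a / (a + d))" by (simp add: l_def Aa field_simps)
  also have "\<dots> \<le> (b + d) / 2 * a"
    using a0 b0 d0 by (intro mult_left_mono) (simp_all add: divide_le_eq mult_left_mono)
  finally have t1: "l / 2 * A \<le> (b + d) * a / 2" by simp
  have "B / (2 * l) = (a + d) / 2 * (b * b / (b + d))" using a0 b0 d0 by (simp add: l_def Bb field_simps)
  also have "\<dots> \<le> (a + d) / 2 * b"
    using a0 b0 d0 by (intro mult_left_mono) (simp_all add: divide_le_eq mult_left_mono)
  finally have t2: "B / (2 * l) \<le> b * (a + d) / 2" by (simp add: algebra_simps)
  have "X \<le> l / 2 * A + B / (2 * l)" by (rule H[OF l0])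
  also have "\<dots> \<le> (b + d) * a / 2 + b * (a + d) / 2" using t1 t2 by simp
  also have "\<dots> = a * b + d * (a + b) / 2" by (simp add: field_simps)
  also have "\<dots> \<le> a * b + e" using dab e by linarith
  finally show "X \<le> sqrt A * sqrt B + e" by (simp add: a_def b_def)
qed

lemma mult_le_weighted_sum_squares:
  fixes l x y :: real
  assumes l: "0 < l"
  shows "x * y \<le> l / 2 * x\<^sup>2 + 1 / (2 * l) * y\<^sup>2"
proof -
  have "0 \<le> (l * x - y)\<^sup>2 / (2 * l)" using l by simp
  also have "\<dots> = l / 2 * x\<^sup>2 + 1 / (2 * l) * y\<^sup>2 - x * y"
    using l by (simp add: field_simps power2_eq_square)
  finally show ?thesis by simp
qed

lemma integral_le_sqrt_mult_sqrt:
  fixes p a b :: "'n::euclidean_space \<Rightarrow> real"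
  assumes p: "p integrable_on S"
    and a: "(\<lambda>t. (a t)\<^sup>2) integrable_on S" and b: "(\<lambda>t. (b t)\<^sup>2) integrable_on S"
    and le: "\<And>t. t \<in> S \<Longrightarrow> p t \<le> a t * b t"
  shows "integral S p \<le> sqrt (integral S (\<lambda>t. (a t)\<^sup>2)) * sqrt (integral S (\<lambda>t. (b t)\<^sup>2))"
proof (rule le_sqrt_mult_sqrtI)
  show "0 \<le> integral S (\<lambda>t. (a t)\<^sup>2)" "0 \<le> integral S (\<lambda>t. (b t)\<^sup>2)"
    by (rule integral_nonneg[OF a] integral_nonneg[OF b]; simp)+
  fix l :: real assume l: "0 < l"
  have a': "(\<lambda>t. l / 2 * (a t)\<^sup>2) integrable_on S" by (rule integrable_on_mult_right[OF a])
  have b': "(\<lambda>t. 1 / (2 * l) * (b t)\<^sup>2) integrable_on S" by (rule integrable_on_mult_right[OF b])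
  have "integral S p \<le> integral S (\<lambda>t. l / 2 * (a t)\<^sup>2 + 1 / (2 * l) * (b t)\<^sup>2)"
  proof (rule integral_le[OF p Henstock_Kurzweil_Integration.integrable_add[OF a' b']])
    fix t assume "t \<in> S"
    show "p t \<le> l / 2 * (a t)\<^sup>2 + 1 / (2 * l) * (b t)\<^sup>2"
      using le[OF \<open>t \<in> S\<close>] mult_le_weighted_sum_squares[OF l] by (rule order_trans)
  qed
  also have "\<dots> = l / 2 * integral S (\<lambda>t. (a t)\<^sup>2) + 1 / (2 * l) * integral S (\<lambda>t. (b t)\<^sup>2)"
    by (simp only: Henstock_Kurzweil_Integration.integral_add[OF a' b'] integral_mult[OF a] integral_mult[OF b])
  finally show "integral S p \<le> l / 2 * integral S (\<lambda>t. (a t)\<^sup>2) + integral S (\<lambda>t. (b t)\<^sup>2) / (2 * l)"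
    by simp
qed

lemma rademacher_pairing_le:
  fixes x :: "nat \<Rightarrow> 'a::banach" and w :: "nat \<Rightarrow> 'a \<Rightarrow>\<^sub>L real"
  assumes x: "x \<in> Rad"
  shows "(\<Sum>i<m. w i (x i))
    \<le> sqrt (integral {0..1} (\<lambda>t. (norm (\<Sum>i<m. rademacher (Suc i) t *\<^sub>R w i))\<^sup>2))
      * sqrt (integral {0..1} (\<lambda>t. (norm (radsum x t))\<^sup>2))"
proof -
  define H where "H t = (\<Sum>i<m. rademacher (Suc i) t *\<^sub>R w i)" for t
  have pairing: "H t (radsum x t) = (\<Sum>i<m. rademacher (Suc i) t * w i (radsum x t))" for t
    by (simp add: H_def blinfun.sum_left blinfun.scaleR_left)
  have "(\<Sum>i<m. w i (x i)) = (\<Sum>i<m. integral {0..1} (\<lambda>t. rademacher (Suc i) t * w i (radsum x t)))"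
    by (simp add: integral_rademacher_mult_radsum(2)[OF x])
  also have "\<dots> = integral {0..1} (\<lambda>t. H t (radsum x t))"
    unfolding pairing by (rule integral_sum[symmetric]) (simp_all add: integral_rademacher_mult_radsum(1)[OF x])
  also have "\<dots> \<le> sqrt (integral {0..1} (\<lambda>t. (norm (H t))\<^sup>2)) * sqrt (integral {0..1} (\<lambda>t. (norm (radsum x t))\<^sup>2))"
  proof (rule integral_le_sqrt_mult_sqrt)
    show "(\<lambda>t. H t (radsum x t)) integrable_on {0..1}"
      unfolding pairing by (intro integrable_sum integral_rademacher_mult_radsum(1)[OF x]) simp
    show "(\<lambda>t. (norm (H t))\<^sup>2) integrable_on {0..1}"
      by (rule integrable_rademacher_determined[where m=m]) (auto simp: H_def intro!: sum.cong)
    show "(\<lambda>t. (norm (radsum x t))\<^sup>2) integrable_on {0..1}"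
      by (rule Rad_square_integrable[OF x])
    show "H t (radsum x t) \<le> norm (H t) * norm (radsum x t)" for t
      using norm_blinfun[of "H t" "radsum x t"] by simp
  qed
  finally show ?thesis unfolding H_def .
qed

text \<open>The values \<open>|f(y\<^sub>i)|\<close> are at most \<open>1\<close>, so for \<open>s \<le> 2\<close> their squares are dominated by their
  \<open>s\<close>-th powers.\<close>

lemma weak2_norm_fin_scaleR_le_1:
  fixes ys :: "nat \<Rightarrow> 'c::real_normed_vector"
  assumes ys: "ys \<in> weak_lp_ball s" and s: "0 < s" "s \<le> 2" and \<sigma>: "\<And>i. \<bar>\<sigma> i\<bar> \<le> 1"
  shows "weak2_norm_fin m (\<lambda>i. \<sigma> i *\<^sub>R ys i) \<le> 1"
  unfolding weak2_norm_fin_def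
proof (rule cSUP_least)
  show "{f :: 'c \<Rightarrow>\<^sub>L real. norm f \<le> 1} \<noteq> {}" by (auto intro: exI[of _ 0])
  fix f :: "'c \<Rightarrow>\<^sub>L real" assume "f \<in> {f. norm f \<le> 1}"
  then have summ: "summable (\<lambda>i. \<bar>f (ys i)\<bar> powr s)" and sum_le: "(\<Sum>i. \<bar>f (ys i)\<bar> powr s) \<le> 1"
    using ys unfolding weak_lp_ball_def by auto
  have term_le: "(f (\<sigma> i *\<^sub>R ys i))\<^sup>2 \<le> \<bar>f (ys i)\<bar> powr s" for i
  proof -
    have "\<bar>f (ys i)\<bar> powr s \<le> 1"
      using sum_le_suminf[OF summ, of "{i}"] sum_le by simp
    then have y1: "\<bar>f (ys i)\<bar> \<le> 1"
      using gr_one_powr[of "\<bar>f (ys i)\<bar>" s] s by (meson not_le)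
    have "(f (\<sigma> i *\<^sub>R ys i))\<^sup>2 = (\<sigma> i)\<^sup>2 * (f (ys i))\<^sup>2"
      by (simp add: blinfun.scaleR_right power_mult_distrib)
    also have "\<dots> \<le> (f (ys i))\<^sup>2"
      using \<sigma>[of i] by (intro mult_left_le_one_le) (simp_all add: abs_square_le_1)
    also have "\<dots> = \<bar>f (ys i)\<bar> powr 2" by simp
    also have "\<dots> \<le> \<bar>f (ys i)\<bar> powr s" by (rule powr_mono'[OF s(2)]) (use y1 in auto)
    finally show ?thesis .
  qed
  have "(\<Sum>i<m. (f (\<sigma> i *\<^sub>R ys i))\<^sup>2) \<le> (\<Sum>i<m. \<bar>f (ys i)\<bar> powr s)"
    by (rule sum_mono[OF term_le])
  also have "\<dots> \<le> (\<Sum>i. \<bar>f (ys i)\<bar> powr s)"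
    by (rule sum_le_suminf[OF summ]) auto
  also have "\<dots> \<le> 1" by (rule sum_le)
  finally show "sqrt (\<Sum>i<m. (f (\<sigma> i *\<^sub>R ys i))\<^sup>2) \<le> 1" by simp
qed

lemma adjoint_op_apply: "blinfun_apply (adjoint_op u) f = f o\<^sub>L u"
  unfolding adjoint_op_def
  by (subst bounded_linear_Blinfun_apply)
     (auto intro: bounded_bilinear.bounded_linear_left[OF bounded_bilinear_blinfun_compose])

lemma almost_summing_adjoint_pairings_bounded:
  fixes u :: "'a::banach \<Rightarrow>\<^sub>L 'b::banach"
  assumes "almost_summing (adjoint_op u)" and x: "x \<in> Rad" and s: "0 < s" "s \<le> 2"
  obtains C :: real
  where "\<And>ys m. ys \<in> weak_lp_ball s \<Longrightarrow> (\<Sum>i<m. \<bar>blinfun_apply (ys i) (u (x i))\<bar>) \<le> C"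
proof -
  obtain C where "C \<ge> 0" and adjoint_bound: "\<And>m (w :: nat \<Rightarrow> ('b \<Rightarrow>\<^sub>L real)).
     sqrt (integral {0..1} (\<lambda>t. (norm (\<Sum>i<m. rademacher (Suc i) t *\<^sub>R adjoint_op u (w i)))\<^sup>2))
       \<le> C * weak2_norm_fin m w"
    using assms(1) unfolding almost_summing_def by blast
  define B where "B = sqrt (integral {0..1} (\<lambda>t. (norm (radsum x t))\<^sup>2))"
  have "0 \<le> B"
    unfolding B_def by (simp add: integral_nonneg Rad_square_integrable[OF x])
  have "(\<Sum>i<m. \<bar>ys i (u (x i))\<bar>) \<le> C * B" if ys: "ys \<in> weak_lp_ball s" for ys :: "nat \<Rightarrow> 'b \<Rightarrow>\<^sub>L real" and m
  proof -
    define w where "w i = sgn (ys i (u (x i))) *\<^sub>R ys i" for i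
    have "(\<Sum>i<m. \<bar>ys i (u (x i))\<bar>) = (\<Sum>i<m. adjoint_op u (w i) (x i))"
      by (rule sum.cong) (auto simp: w_def adjoint_op_apply blinfun.scaleR_left sgn_if)
    also have "\<dots> \<le> C * weak2_norm_fin m w * B"
      unfolding B_def using rademacher_pairing_le[OF x] adjoint_bound
      by (rule order_trans[OF _ mult_right_mono]) (simp add: integral_nonneg Rad_square_integrable[OF x])
    also have "\<dots> \<le> C * 1 * B"
    proof (intro mult_right_mono mult_left_mono)
      show "weak2_norm_fin m w \<le> 1"
        unfolding w_def by (intro weak2_norm_fin_scaleR_le_1[OF ys s]) (simp add: sgn_if)
    qed (simp_all add: \<open>C \<ge> 0\<close> \<open>0 \<le> B\<close>)
    finally show ?thesis by simp
  qed
  then show ?thesis by (rule that)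
qed

theorem corollary2p2:
  fixes u :: "'a::banach \<Rightarrow>\<^sub>L 'b::banach"
  assumes "almost_summing (adjoint_op u)"
    and "q \<ge> (2::real)"
    and "x \<in> Rad"
  shows "(\<lambda>i. blinfun_apply u (x i)) \<in> cohen_lq q"
proof -
  have "0 < q / (q - 1)" "q / (q - 1) \<le> 2"
    using assms(2) by (simp_all add: field_simps)
  then obtain C :: real where partial_sums: "\<And>ys m. ys \<in> weak_lp_ball (q / (q - 1)) \<Longrightarrow>
      (\<Sum>i<m. \<bar>blinfun_apply (ys i) (u (x i))\<bar>) \<le> C"
    using almost_summing_adjoint_pairings_bounded[OF assms(1,3)] by blast
  show ?thesis
    unfolding cohen_lq_def
  proof (intro CollectI exI[of _ C] ballI conjI)
    fix ys :: "nat \<Rightarrow> 'b \<Rightarrow>\<^sub>L real"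
    assume ys: "ys \<in> weak_lp_ball (q / (q - 1))"
    show summable: "summable (\<lambda>i. \<bar>ys i (u (x i))\<bar>)"
      by (rule summableI_nonneg_bounded[OF _ partial_sums[OF ys]]) simp
    show "(\<Sum>i. \<bar>ys i (u (x i))\<bar>) \<le> C"
      by (rule suminf_le_const[OF summable partial_sums[OF ys]])
  qed
qed

end
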